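(* Let $\Xi:M_p\to M_q$ be an entanglement-breaking channel of the form $\Xi(X)=\sum_{i=1}^l\mathrm{Tr}[XM_i]\sigma_i$, where $(M_i)_{i=1}^l$ is a POVM on $\mathbb C^p$ and $\sigma_i\in D_q$, and let $\Psi:M_N\to M_k$ be a quantum channel. Then the image of all states under $\Xi\otimes\Psi$ is $$K_{\Xi\otimes\Psi}=(\Xi\otimes\Psi)(D_{pN})=\mathrm{hull}\Big\{\sum_{i=1}^l\sigma_i\otimes\Psi(BM_i^TB^* ):\ B\in M_{N,p}(\mathbb C),\ \mathrm{Tr}[BB^*]=1\Big\}.$$
   Context: A POVM is a family of positive semidefinite matrices summing to the identity. $M_i^T$ is the transpose in the canonical basis; $M_{N,p}(\mathbb C)$ is the space of $N\times p$ complex matrices; $\mathrm{hull}$ is the convex hull; $D_d$ is the set of $d\times d$ density matrices. *)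

theory Defs
  imports "Jordan_Normal_Form.Schur_Decomposition"
begin

text \<open>Tensor (Kronecker) products use the
  convention that the first factor is the outer (block) index.\<close>

definition mtrace :: "complex mat \<Rightarrow> complex" where
  "mtrace A = (\<Sum>i<dim_row A. A $$ (i, i))"

definition psd :: "nat \<Rightarrow> complex mat \<Rightarrow> bool" where
  "psd n A \<longleftrightarrow> A \<in> carrier_mat n n \<and>
     (\<forall>v \<in> carrier_vec n. Im ((A *\<^sub>v v) \<bullet>c v) = 0 \<and> Re ((A *\<^sub>v v) \<bullet>c v) \<ge> 0)"

definition density :: "nat \<Rightarrow> complex mat \<Rightarrow> bool" where
  "density n A \<longleftrightarrow> psd n A \<and> mtrace A = 1"

definition msum :: "nat \<Rightarrow> nat \<Rightarrow> 'i set \<Rightarrow> ('i \<Rightarrow> complex mat) \<Rightarrow> complex mat" where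
  "msum r c I F = mat r c (\<lambda>(i, j). \<Sum>t\<in>I. F t $$ (i, j))"

definition POVM :: "nat \<Rightarrow> nat \<Rightarrow> (nat \<Rightarrow> complex mat) \<Rightarrow> bool" where
  "POVM p l M \<longleftrightarrow> (\<forall>i<l. psd p (M i)) \<and> msum p p {..<l} M = 1\<^sub>m p"

definition kron :: "complex mat \<Rightarrow> complex mat \<Rightarrow> complex mat" where
  "kron A B = mat (dim_row A * dim_row B) (dim_col A * dim_col B)
     (\<lambda>(i, j). A $$ (i div dim_row B, j div dim_col B) * B $$ (i mod dim_row B, j mod dim_col B))"

definition unit_mat :: "nat \<Rightarrow> nat \<Rightarrow> nat \<Rightarrow> complex mat" where
  "unit_mat p a b = mat p p (\<lambda>(i, j). if i = a \<and> j = b then 1 else 0)"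

text \<open>Block (a,b) of size N x N of a (p*N) x (p*N) matrix, i.e. viewing
  M_{pN} = M_p \<otimes> M_N.\<close>
definition block :: "nat \<Rightarrow> complex mat \<Rightarrow> nat \<Rightarrow> nat \<Rightarrow> complex mat" where
  "block N X a b = mat N N (\<lambda>(i, j). X $$ (a * N + i, b * N + j))"

text \<open>Tensor product of linear maps Phi : M_p -> M_q and Psi : M_N -> M_k,
  as a map M_{pN} -> M_{qk}: (Phi \<otimes> Psi)(X) = sum_{a,b} Phi(E_ab) \<otimes> Psi(X_ab).\<close>
definition tensor_map :: "nat \<Rightarrow> nat \<Rightarrow> nat \<Rightarrow> nat \<Rightarrow>
    (complex mat \<Rightarrow> complex mat) \<Rightarrow> (complex mat \<Rightarrow> complex mat) \<Rightarrow> complex mat \<Rightarrow> complex mat" where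
  "tensor_map p N q k \<Phi> \<Psi> X = msum (q * k) (q * k) ({..<p} \<times> {..<p})
     (\<lambda>(a, b). kron (\<Phi> (unit_mat p a b)) (\<Psi> (block N X a b)))"

definition linear_map :: "nat \<Rightarrow> nat \<Rightarrow> (complex mat \<Rightarrow> complex mat) \<Rightarrow> bool" where
  "linear_map N k \<Psi> \<longleftrightarrow> (\<forall>A \<in> carrier_mat N N. \<Psi> A \<in> carrier_mat k k) \<and>
     (\<forall>A \<in> carrier_mat N N. \<forall>B \<in> carrier_mat N N. \<Psi> (A + B) = \<Psi> A + \<Psi> B) \<and>
     (\<forall>A \<in> carrier_mat N N. \<forall>c. \<Psi> (c \<cdot>\<^sub>m A) = c \<cdot>\<^sub>m \<Psi> A)"

definition completely_positive :: "nat \<Rightarrow> nat \<Rightarrow> (complex mat \<Rightarrow> complex mat) \<Rightarrow> bool" where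
  "completely_positive N k \<Psi> \<longleftrightarrow>
     (\<forall>m X. psd (m * N) X \<longrightarrow> psd (m * k) (tensor_map m N m k (\<lambda>A. A) \<Psi> X))"

definition trace_preserving :: "nat \<Rightarrow> (complex mat \<Rightarrow> complex mat) \<Rightarrow> bool" where
  "trace_preserving N \<Psi> \<longleftrightarrow> (\<forall>A \<in> carrier_mat N N. mtrace (\<Psi> A) = mtrace A)"

definition quantum_channel :: "nat \<Rightarrow> nat \<Rightarrow> (complex mat \<Rightarrow> complex mat) \<Rightarrow> bool" where
  "quantum_channel N k \<Psi> \<longleftrightarrow> linear_map N k \<Psi> \<and> completely_positive N k \<Psi> \<and> trace_preserving N \<Psi>"

definition mat_hull :: "nat \<Rightarrow> nat \<Rightarrow> complex mat set \<Rightarrow> complex mat set" where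
  "mat_hull r c S = {A. \<exists>n (w :: nat \<Rightarrow> real) F. (\<forall>t<n. 0 \<le> w t \<and> F t \<in> S) \<and> (\<Sum>t<n. w t) = 1 \<and>
      A = msum r c {..<n} (\<lambda>t. complex_of_real (w t) \<cdot>\<^sub>m F t)}"

end

theory Submission
  imports Defs
begin

text \<open>Both sides are convex: the image of the convex set of states under the linear map
  \<open>\<Xi> \<otimes> \<Psi>\<close> is the convex hull of the images of pure states, because every density matrix
  is a convex combination of rank-one projections \<open>|u\<rangle>\<langle>u|\<close> (a Cholesky-type
  factorisation of a positive semidefinite matrix). Writing a unit vector \<open>u \<in> \<complex>\<^sup>p \<otimes> \<complex>\<^sup>N\<close>
  as the column stacking of a matrix \<open>B \<in> M\<^sub>N\<^sub>,\<^sub>p\<close> with \<open>Tr[BB\<^sup>*] = 1\<close>, the partial trace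
  \<open>Tr\<^sub>1[(M\<^sub>i \<otimes> 1) |u\<rangle>\<langle>u|]\<close> is \<open>B M\<^sub>i\<^sup>T B\<^sup>*\<close>, so
  \<open>(\<Xi> \<otimes> \<Psi>)(|u\<rangle>\<langle>u|) = \<Sum>\<^sub>i \<sigma>\<^sub>i \<otimes> \<Psi>(B M\<^sub>i\<^sup>T B\<^sup>*)\<close>.\<close>

section \<open>Positive semidefinite kernels\<close>

text \<open>Positivity is phrased for entry functions rather than matrices, so that Schur complements
  and rank-one updates need no carrier bookkeeping.\<close>

definition quad_form :: "nat \<Rightarrow> (nat \<Rightarrow> nat \<Rightarrow> complex) \<Rightarrow> (nat \<Rightarrow> complex) \<Rightarrow> complex" where
  "quad_form n f v = (\<Sum>i<n. (\<Sum>j<n. f i j * v j) * cnj (v i))"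

definition psd_kernel :: "nat \<Rightarrow> (nat \<Rightarrow> nat \<Rightarrow> complex) \<Rightarrow> bool" where
  "psd_kernel n f \<longleftrightarrow> (\<forall>v. Im (quad_form n f v) = 0 \<and> Re (quad_form n f v) \<ge> 0)"

lemma quad_form_cong:
  "(\<And>i j. i < n \<Longrightarrow> j < n \<Longrightarrow> f i j = g i j) \<Longrightarrow> (\<And>i. i < n \<Longrightarrow> v i = w i) \<Longrightarrow>
    quad_form n f v = quad_form n g w"
  unfolding quad_form_def by (intro sum.cong refl arg_cong2[where f="(*)"]) auto

lemma psd_kernel_cong:
  "(\<And>i j. i < n \<Longrightarrow> j < n \<Longrightarrow> f i j = g i j) \<Longrightarrow> psd_kernel n f = psd_kernel n g"
  unfolding psd_kernel_def using quad_form_cong[of n f g] by metis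

lemma psd_iff_psd_kernel: "psd n X \<longleftrightarrow> X \<in> carrier_mat n n \<and> psd_kernel n (\<lambda>i j. X $$ (i, j))"
proof -
  have form: "(X *\<^sub>v v) \<bullet>c v = quad_form n (\<lambda>i j. X $$ (i, j)) (\<lambda>i. v $ i)"
    if "X \<in> carrier_mat n n" "v \<in> carrier_vec n" for v
    using that unfolding quad_form_def
    by (auto simp: scalar_prod_def mult_mat_vec_def lessThan_atLeast0 intro!: sum.cong)
  have "quad_form n f v = quad_form n f (\<lambda>i. vec n v $ i)" for f v
    by (rule quad_form_cong) auto
  then show ?thesis
    unfolding psd_def psd_kernel_def using form by (metis vec_carrier)
qed

lemma quad_form_single:
  assumes "i < n"
  shows "quad_form n f (\<lambda>x. if x = i then a else 0) = f i i * a * cnj a"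
  using assms unfolding quad_form_def by (simp add: if_distrib cong: if_cong)

lemma quad_form_pair:
  assumes "i < n" "j < n" "i \<noteq> j"
  shows "quad_form n f (\<lambda>x. if x = i then a else if x = j then b else 0) =
    f i i * a * cnj a + f i j * b * cnj a + f j i * a * cnj b + f j j * b * cnj b"
proof -
  have pick: "(\<Sum>x<n. h x * (if x = i then c else if x = j then d else 0)) = h i * c + h j * d"
    for h :: "nat \<Rightarrow> complex" and c d
  proof -
    have "(\<Sum>x<n. h x * (if x = i then c else if x = j then d else 0)) =
        (\<Sum>x<n. if x = i then h x * c else 0) + (\<Sum>x<n. if x = j then h x * d else 0)"
      unfolding sum.distrib[symmetric] by (rule sum.cong) (use assms in auto)
    then show ?thesis using assms by simp
  qed
  have conj: "cnj (if x = i then a else if x = j then b else 0) =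
      (if x = i then cnj a else if x = j then cnj b else 0)" for x
    by auto
  show ?thesis unfolding quad_form_def conj pick by (simp add: distrib_right)
qed

lemma psd_kernel_diag:
  assumes "psd_kernel n f" "i < n"
  shows "Im (f i i) = 0" "Re (f i i) \<ge> 0"
proof -
  have "quad_form n f (\<lambda>x. if x = i then 1 else 0) = f i i"
    using quad_form_single[OF assms(2), of f 1] by simp
  then show "Im (f i i) = 0" "Re (f i i) \<ge> 0"
    using assms(1) unfolding psd_kernel_def by metis+
qed

lemma psd_kernel_hermitian:
  assumes P: "psd_kernel n f" and ij: "i < n" "j < n"
  shows "f j i = cnj (f i j)"
proof (cases "i = j")
  case True
  then show ?thesis using psd_kernel_diag[OF P, of i] ij by (simp add: complex_eq_iff)
next
  case False
  have diag: "Im (f i i) = 0" "Im (f j j) = 0" using psd_kernel_diag[OF P] ij by auto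
  have "Im (quad_form n f (\<lambda>x. if x = i then 1 else if x = j then c else 0)) = 0" for c
    using P unfolding psd_kernel_def by blast
  from this[of 1] this[of \<i>] diag show ?thesis
    unfolding quad_form_pair[OF ij False] by (simp add: complex_eq_iff)
qed

text \<open>Testing against the vector \<open>-s f m j e\<^sub>m + e\<^sub>j\<close> for large \<open>s\<close> makes the form negative.\<close>
lemma psd_kernel_zero_diag_row:
  assumes P: "psd_kernel n f" and m: "m < n" and j: "j < n" and zero: "f m m = 0"
  shows "f m j = 0"
proof (rule ccontr)
  assume nz: "f m j \<noteq> 0"
  then have mj: "m \<noteq> j" using zero by auto
  define c where "c = f m j"
  define r where "r = (Re c)\<^sup>2 + (Im c)\<^sup>2"
  have r: "r > 0"
    using nz unfolding r_def c_def by (simp add: complex_eq_iff sum_power2_gt_zero_iff)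
  define s where "s = (Re (f j j) + 1) / (2 * r)"
  have herm: "f j m = cnj c" using psd_kernel_hermitian[OF P m j] c_def by simp
  let ?v = "\<lambda>x. if x = m then - complex_of_real s * c else if x = j then 1 else 0"
  have "0 \<le> Re (quad_form n f ?v)"
    using P unfolding psd_kernel_def by blast
  also have "Re (quad_form n f ?v) = Re (f j j) - 2 * s * r"
    unfolding quad_form_pair[OF m j mj] zero herm r_def c_def[symmetric]
    by (simp add: algebra_simps power2_eq_square)
  also have "\<dots> = -1" unfolding s_def using r by (simp add: field_simps)
  finally show False by simp
qed

lemma psd_kernel_schur_complement:
  assumes P: "psd_kernel n f" and m: "m < n" and nz: "f m m \<noteq> 0"
  shows "psd_kernel n (\<lambda>i j. f i j - f i m * f m j / f m m)"
  unfolding psd_kernel_def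
proof
  fix v
  let ?g = "\<lambda>i j. f i j - f i m * f m j / f m m"
  define c where "c = (\<Sum>j<n. f m j * v j) / f m m"
  define w where "w = (\<lambda>x. v x - (if x = m then c else 0))"
  define E where "E = (\<lambda>i. (\<Sum>j<n. f i j * v j) - f i m * c)"
  have f_w: "(\<Sum>j<n. f i j * w j) = E i" for i
  proof -
    have "(\<Sum>j<n. f i j * w j) = (\<Sum>j<n. f i j * v j) - (\<Sum>j<n. if j = m then f i j * c else 0)"
      unfolding w_def sum_subtractf[symmetric] by (rule sum.cong) (auto simp: algebra_simps)
    then show ?thesis using m unfolding E_def by simp
  qed
  have g_v: "(\<Sum>j<n. ?g i j * v j) = E i" for i
  proof -
    have "(\<Sum>j<n. ?g i j * v j) = (\<Sum>j<n. f i j * v j) - f i m / f m m * (\<Sum>j<n. f m j * v j)"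
      by (simp add: sum_subtractf sum_distrib_left algebra_simps)
    then show ?thesis unfolding E_def c_def by simp
  qed
  have "E m = 0" unfolding E_def c_def using nz by simp
  have "quad_form n f w = (\<Sum>i<n. E i * cnj (v i)) - (\<Sum>i<n. if i = m then E i * cnj c else 0)"
    unfolding quad_form_def f_w sum_subtractf[symmetric]
    by (rule sum.cong) (auto simp: w_def algebra_simps)
  also have "\<dots> = quad_form n ?g v"
    using m \<open>E m = 0\<close> unfolding quad_form_def g_v by simp
  finally show "Im (quad_form n ?g v) = 0 \<and> 0 \<le> Re (quad_form n ?g v)"
    using P unfolding psd_kernel_def by metis
qed

lemma psd_kernel_split_rank_one:
  assumes P: "psd_kernel n f" and m: "m < n"
    and zero: "\<forall>i<n. \<forall>j<n. (i < m \<or> j < m) \<longrightarrow> f i j = 0"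
  obtains x g where "psd_kernel n g" "\<forall>i<n. \<forall>j<n. (i \<le> m \<or> j \<le> m) \<longrightarrow> g i j = 0"
    "\<forall>i<n. \<forall>j<n. f i j = x i * cnj (x j) + g i j"
proof (cases "f m m = 0")
  case True
  have "f m j = 0" "f j m = 0" if "j < n" for j
    using psd_kernel_zero_diag_row[OF P m that True] psd_kernel_hermitian[OF P m that] by simp_all
  then have "\<forall>i<n. \<forall>j<n. (i \<le> m \<or> j \<le> m) \<longrightarrow> f i j = 0"
    using zero by (metis le_neq_implies_less)
  with P show ?thesis by (intro that[of f "\<lambda>_. 0"]) auto
next
  case False
  define r where "r = Re (f m m)"
  have fmm: "f m m = complex_of_real r"
    using psd_kernel_diag[OF P m] unfolding r_def by (simp add: complex_eq_iff)
  have r: "r > 0" using psd_kernel_diag[OF P m] False fmm r_def by (metis less_eq_real_def of_real_0)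
  define g where "g = (\<lambda>i j. f i j - f i m * f m j / f m m)"
  define x where "x = (\<lambda>i. f i m / complex_of_real (sqrt r))"
  have "x i * cnj (x j) = f i m * f m j / f m m" if "j < n" for i j
  proof -
    have "cnj (f j m) = f m j" using psd_kernel_hermitian[OF P that m] by simp
    moreover have "complex_of_real (sqrt r) * complex_of_real (sqrt r) = f m m"
      using r fmm by (simp flip: of_real_mult)
    ultimately show ?thesis unfolding x_def by simp
  qed
  then have "\<forall>i<n. \<forall>j<n. f i j = x i * cnj (x j) + g i j" unfolding g_def by simp
  moreover have "\<forall>i<n. \<forall>j<n. (i \<le> m \<or> j \<le> m) \<longrightarrow> g i j = 0"
    using zero m False unfolding g_def by (auto simp: le_less)
  ultimately show ?thesis
    using psd_kernel_schur_complement[OF P m False] that unfolding g_def by blast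
qed

lemma psd_kernel_gram_from:
  assumes "psd_kernel n f" "\<forall>i<n. \<forall>j<n. (i < m \<or> j < m) \<longrightarrow> f i j = 0"
  shows "\<exists>u. \<forall>i<n. \<forall>j<n. f i j = (\<Sum>t\<in>{m..<n}. u t i * cnj (u t j))"
  using assms
proof (induction "n - m" arbitrary: f m)
  case 0
  then show ?case by auto
next
  case (Suc d)
  then have m: "m < n" by auto
  obtain x g where g: "psd_kernel n g" "\<forall>i<n. \<forall>j<n. (i \<le> m \<or> j \<le> m) \<longrightarrow> g i j = 0"
    and f: "\<forall>i<n. \<forall>j<n. f i j = x i * cnj (x j) + g i j"
    using psd_kernel_split_rank_one[OF Suc.prems(1) m Suc.prems(2)] .
  have "d = n - Suc m" using Suc.hyps(2) by arith
  moreover have "\<forall>i<n. \<forall>j<n. (i < Suc m \<or> j < Suc m) \<longrightarrow> g i j = 0"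
    using g(2) by (simp add: less_Suc_eq_le)
  ultimately obtain u where u: "\<forall>i<n. \<forall>j<n. g i j = (\<Sum>t\<in>{Suc m..<n}. u t i * cnj (u t j))"
    using Suc.hyps(1) g(1) by blast
  have "f i j = (\<Sum>t\<in>{m..<n}. (u(m := x)) t i * cnj ((u(m := x)) t j))" if "i < n" "j < n" for i j
  proof -
    have "(\<Sum>t\<in>{Suc m..<n}. (u(m := x)) t i * cnj ((u(m := x)) t j)) =
        (\<Sum>t\<in>{Suc m..<n}. u t i * cnj (u t j))"
      by (intro sum.cong) auto
    then show ?thesis using f u that m by (simp add: sum.atLeast_Suc_lessThan)
  qed
  then show ?case by blast
qed

lemma psd_kernel_gram:
  "psd_kernel n f \<Longrightarrow> \<exists>u. \<forall>i<n. \<forall>j<n. f i j = (\<Sum>t<n. u t i * cnj (u t j))"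
  using psd_kernel_gram_from[of n f 0] by (simp add: atLeast0LessThan)

lemma psd_kernel_sum_rank_one:
  assumes "\<forall>t\<in>I. w t \<ge> 0"
  shows "psd_kernel n (\<lambda>r s. \<Sum>t\<in>I. complex_of_real (w t) * (u t r * cnj (u t s)))"
  unfolding psd_kernel_def
proof
  fix v
  define S where "S t = (\<Sum>s<n. cnj (u t s) * v s)" for t
  let ?f = "\<lambda>r s. \<Sum>t\<in>I. complex_of_real (w t) * (u t r * cnj (u t s))"
  have "quad_form n ?f v =
      (\<Sum>r<n. \<Sum>s<n. \<Sum>t\<in>I. complex_of_real (w t) * (u t r * cnj (v r)) * (cnj (u t s) * v s))"
    unfolding quad_form_def sum_distrib_right by (intro sum.cong refl) (simp add: algebra_simps)
  also have "\<dots> = (\<Sum>t\<in>I. \<Sum>r<n. \<Sum>s<n. complex_of_real (w t) * (u t r * cnj (v r)) * (cnj (u t s) * v s))"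
    by (subst sum.swap, subst (2) sum.swap) (rule refl)
  also have "\<dots> = (\<Sum>t\<in>I. complex_of_real (w t) * (cnj (S t) * S t))"
    unfolding S_def by (simp add: sum_distrib_left sum_distrib_right algebra_simps)
  also have "\<dots> = complex_of_real (\<Sum>t\<in>I. w t * (cmod (S t))\<^sup>2)"
    by (simp add: of_real_sum mult.commute flip: complex_norm_square)
  finally show "Im (quad_form n ?f v) = 0 \<and> 0 \<le> Re (quad_form n ?f v)"
    using assms by (simp add: sum_nonneg)
qed

section \<open>Linearity of the tensor product map\<close>

lemma msum_carrier [simp]: "msum r c I F \<in> carrier_mat r c"
  and dim_row_msum [simp]: "dim_row (msum r c I F) = r"
  and dim_col_msum [simp]: "dim_col (msum r c I F) = c"
  by (auto simp: msum_def)

lemma index_msum [simp]: "i < r \<Longrightarrow> j < c \<Longrightarrow> msum r c I F $$ (i, j) = (\<Sum>t\<in>I. F t $$ (i, j))"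
  by (simp add: msum_def)

lemma msum_cong: "(\<And>t. t \<in> I \<Longrightarrow> F t = G t) \<Longrightarrow> msum r c I F = msum r c I G"
  unfolding msum_def by (intro cong_mat refl sum.cong) auto

lemma msum_empty: "msum r c {} F = 0\<^sub>m r c"
  by (rule eq_matI) auto

lemma msum_insert:
  "finite I \<Longrightarrow> x \<notin> I \<Longrightarrow> F x \<in> carrier_mat r c \<Longrightarrow> msum r c (insert x I) F = F x + msum r c I F"
  by (rule eq_matI) auto

lemma linear_map_carrier: "linear_map N k \<Psi> \<Longrightarrow> A \<in> carrier_mat N N \<Longrightarrow> \<Psi> A \<in> carrier_mat k k"
  unfolding linear_map_def by blast

lemma linear_map_zero:
  assumes "linear_map N k \<Psi>"
  shows "\<Psi> (0\<^sub>m N N) = 0\<^sub>m k k"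
proof -
  have "\<Psi> (0\<^sub>m N N) = \<Psi> (0 \<cdot>\<^sub>m 0\<^sub>m N N)" by simp
  also have "\<dots> = 0 \<cdot>\<^sub>m \<Psi> (0\<^sub>m N N)"
    using assms unfolding linear_map_def by (meson zero_carrier_mat)
  also have "\<dots> = 0\<^sub>m k k"
    using linear_map_carrier[OF assms zero_carrier_mat] by (intro eq_matI) auto
  finally show ?thesis .
qed

lemma linear_map_msum:
  assumes L: "linear_map N k \<Psi>" and "finite I" and "\<forall>t\<in>I. A t \<in> carrier_mat N N"
  shows "\<Psi> (msum N N I (\<lambda>t. c t \<cdot>\<^sub>m A t)) = msum k k I (\<lambda>t. c t \<cdot>\<^sub>m \<Psi> (A t))"
  using assms(2,3)
proof (induction I rule: finite_induct)
  case empty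
  then show ?case using linear_map_zero[OF L] by (simp add: msum_empty)
next
  case (insert x I)
  then have A: "A x \<in> carrier_mat N N" by simp
  have "\<Psi> (msum N N (insert x I) (\<lambda>t. c t \<cdot>\<^sub>m A t)) = \<Psi> (c x \<cdot>\<^sub>m A x + msum N N I (\<lambda>t. c t \<cdot>\<^sub>m A t))"
    using insert A by (subst msum_insert) auto
  also have "\<dots> = c x \<cdot>\<^sub>m \<Psi> (A x) + \<Psi> (msum N N I (\<lambda>t. c t \<cdot>\<^sub>m A t))"
    using L A unfolding linear_map_def by (metis msum_carrier smult_carrier_mat)
  also have "\<dots> = msum k k (insert x I) (\<lambda>t. c t \<cdot>\<^sub>m \<Psi> (A t))"
    using insert linear_map_carrier[OF L A] by (subst msum_insert) auto
  finally show ?case .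
qed

lemma index_kron:
  assumes "A \<in> carrier_mat q q" "B \<in> carrier_mat k k" "r < q * k" "s < q * k"
  shows "kron A B $$ (r, s) = A $$ (r div k, s div k) * B $$ (r mod k, s mod k)"
  using assms unfolding kron_def by simp

lemma block_index_less: "a < (p::nat) \<Longrightarrow> j < N \<Longrightarrow> a * N + j < p * N"
proof -
  assume "a < p" "j < N"
  then have "a * N + j < Suc a * N" by simp
  also have "\<dots> \<le> p * N" using \<open>a < p\<close> by (intro mult_le_mono1) simp
  finally show ?thesis .
qed

lemma block_carrier [simp]: "block N X a b \<in> carrier_mat N N"
  by (simp add: block_def)

lemma block_msum:
  assumes "\<forall>t\<in>I. X t \<in> carrier_mat (p * N) (p * N)" "a < p" "b < p"
  shows "block N (msum (p * N) (p * N) I (\<lambda>t. c t \<cdot>\<^sub>m X t)) a b = msum N N I (\<lambda>t. c t \<cdot>\<^sub>m block N (X t) a b)"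
  using assms by (intro eq_matI) (auto simp: block_def block_index_less intro!: sum.cong)

lemma dim_tensor_map [simp]:
  "dim_row (tensor_map p N q k \<Phi> \<Psi> X) = q * k" "dim_col (tensor_map p N q k \<Phi> \<Psi> X) = q * k"
  by (auto simp: tensor_map_def)

lemma index_tensor_map:
  assumes \<Phi>: "\<forall>a<p. \<forall>b<p. \<Phi> (unit_mat p a b) \<in> carrier_mat q q" and L: "linear_map N k \<Psi>"
    and "r < q * k" "s < q * k"
  shows "tensor_map p N q k \<Phi> \<Psi> X $$ (r, s) = (\<Sum>(a, b)\<in>{..<p} \<times> {..<p}.
    \<Phi> (unit_mat p a b) $$ (r div k, s div k) * \<Psi> (block N X a b) $$ (r mod k, s mod k))"
  unfolding tensor_map_def using assms(3,4)
  by (auto intro!: sum.cong index_kron \<Phi>[rule_format] linear_map_carrier[OF L block_carrier])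

lemma tensor_map_msum:
  assumes \<Phi>: "\<forall>a<p. \<forall>b<p. \<Phi> (unit_mat p a b) \<in> carrier_mat q q" and L: "linear_map N k \<Psi>"
    and I: "finite I" and X: "\<forall>t\<in>I. X t \<in> carrier_mat (p * N) (p * N)"
  shows "tensor_map p N q k \<Phi> \<Psi> (msum (p * N) (p * N) I (\<lambda>t. c t \<cdot>\<^sub>m X t)) =
    msum (q * k) (q * k) I (\<lambda>t. c t \<cdot>\<^sub>m tensor_map p N q k \<Phi> \<Psi> (X t))"
proof (rule eq_matI)
  fix r s assume "r < dim_row (msum (q * k) (q * k) I (\<lambda>t. c t \<cdot>\<^sub>m tensor_map p N q k \<Phi> \<Psi> (X t)))"
    "s < dim_col (msum (q * k) (q * k) I (\<lambda>t. c t \<cdot>\<^sub>m tensor_map p N q k \<Phi> \<Psi> (X t)))"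
  then have rs: "r < q * k" "s < q * k" by auto
  then have "0 < k" by (metis mult_eq_0_iff neq0_conv not_less0)
  then have block_image: "\<Psi> (block N (msum (p * N) (p * N) I (\<lambda>t. c t \<cdot>\<^sub>m X t)) a b) $$ (r mod k, s mod k) =
      (\<Sum>t\<in>I. c t * \<Psi> (block N (X t) a b) $$ (r mod k, s mod k))" if "a < p" "b < p" for a b
    using that X
    by (simp add: block_msum linear_map_msum[OF L I]
        linear_map_carrier[OF L block_carrier, THEN carrier_matD(1)]
        linear_map_carrier[OF L block_carrier, THEN carrier_matD(2)])
  let ?\<Phi> = "\<lambda>a b. \<Phi> (unit_mat p a b) $$ (r div k, s div k)"
  let ?\<Psi> = "\<lambda>t a b. \<Psi> (block N (X t) a b) $$ (r mod k, s mod k)"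
  have "tensor_map p N q k \<Phi> \<Psi> (msum (p * N) (p * N) I (\<lambda>t. c t \<cdot>\<^sub>m X t)) $$ (r, s) =
      (\<Sum>(a, b)\<in>{..<p} \<times> {..<p}. \<Sum>t\<in>I. c t * (?\<Phi> a b * ?\<Psi> t a b))"
    unfolding index_tensor_map[OF \<Phi> L rs]
    by (intro sum.cong refl) (auto simp: block_image sum_distrib_left mult.left_commute)
  also have "\<dots> = (\<Sum>t\<in>I. c t * (\<Sum>(a, b)\<in>{..<p} \<times> {..<p}. ?\<Phi> a b * ?\<Psi> t a b))"
    unfolding sum_distrib_left split_def by (rule sum.swap)
  also have "\<dots> = msum (q * k) (q * k) I (\<lambda>t. c t \<cdot>\<^sub>m tensor_map p N q k \<Phi> \<Psi> (X t)) $$ (r, s)"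
    using rs by (simp add: index_tensor_map[OF \<Phi> L rs])
  finally show "tensor_map p N q k \<Phi> \<Psi> (msum (p * N) (p * N) I (\<lambda>t. c t \<cdot>\<^sub>m X t)) $$ (r, s) =
      msum (q * k) (q * k) I (\<lambda>t. c t \<cdot>\<^sub>m tensor_map p N q k \<Phi> \<Psi> (X t)) $$ (r, s)" .
qed simp_all

section \<open>Density matrices as mixtures of pure states\<close>

definition rank_one_mat :: "nat \<Rightarrow> (nat \<Rightarrow> complex) \<Rightarrow> complex mat" where
  "rank_one_mat n u = mat n n (\<lambda>(r, s). u r * cnj (u s))"

lemma rank_one_mat_carrier [simp]: "rank_one_mat n u \<in> carrier_mat n n"
  by (simp add: rank_one_mat_def)

lemma rank_one_mat_cong: "(\<And>r. r < n \<Longrightarrow> u r = v r) \<Longrightarrow> rank_one_mat n u = rank_one_mat n v"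
  by (intro eq_matI) (auto simp: rank_one_mat_def)

lemma density_convex_rank_one:
  assumes I: "finite I" and w: "\<forall>t\<in>I. 0 \<le> w t" "(\<Sum>t\<in>I. w t) = 1"
    and u: "\<forall>t\<in>I. (\<Sum>r<n. (cmod (u t r))\<^sup>2) = 1"
  shows "density n (msum n n I (\<lambda>t. complex_of_real (w t) \<cdot>\<^sub>m rank_one_mat n (u t)))"
proof -
  let ?X = "msum n n I (\<lambda>t. complex_of_real (w t) \<cdot>\<^sub>m rank_one_mat n (u t))"
  have X: "?X $$ (r, s) = (\<Sum>t\<in>I. complex_of_real (w t) * (u t r * cnj (u t s)))"
    if "r < n" "s < n" for r s
    using that by (simp add: rank_one_mat_def)
  have "psd n ?X"
    unfolding psd_iff_psd_kernel using psd_kernel_sum_rank_one[OF w(1)] psd_kernel_cong[of n, OF X] by simp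
  have "mtrace ?X = (\<Sum>r<n. \<Sum>t\<in>I. complex_of_real (w t) * (u t r * cnj (u t r)))"
    unfolding mtrace_def dim_row_msum by (intro sum.cong refl X) auto
  also have "\<dots> = (\<Sum>t\<in>I. complex_of_real (w t) * (\<Sum>r<n. u t r * cnj (u t r)))"
    unfolding sum_distrib_left by (rule sum.swap)
  also have "\<dots> = (\<Sum>t\<in>I. complex_of_real (w t))"
    using u unfolding complex_norm_square[symmetric] of_real_sum[symmetric] by simp
  also have "\<dots> = 1"
    using w(2) unfolding of_real_sum[symmetric] by simp
  finally show ?thesis using \<open>psd n ?X\<close> unfolding density_def by simp
qed

lemma unit_vector_scaling:
  fixes v :: "nat \<Rightarrow> complex"
  assumes n: "0 < n"
  obtains u where "(\<Sum>r<n. (cmod (u r))\<^sup>2) = 1"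
    "\<forall>r<n. v r = complex_of_real (sqrt (\<Sum>r<n. (cmod (v r))\<^sup>2)) * u r"
proof (cases "(\<Sum>r<n. (cmod (v r))\<^sup>2) = 0")
  case True
  then have v: "\<forall>r<n. v r = 0" by (simp add: sum_nonneg_eq_0_iff)
  define e :: "nat \<Rightarrow> complex" where "e r = (if r = 0 then 1 else 0)" for r
  have "(cmod (e r))\<^sup>2 = (if r = 0 then 1 else 0)" for r
    unfolding e_def by simp
  then have "(\<Sum>r<n. (cmod (e r))\<^sup>2) = 1"
    using n by simp
  with v True show ?thesis using that[of e] by simp
next
  case False
  define c where "c = (\<Sum>r<n. (cmod (v r))\<^sup>2)"
  then have "0 < c" using False by (simp add: sum_nonneg order_less_le)
  have "(\<Sum>r<n. (cmod (v r / sqrt c))\<^sup>2) = (\<Sum>r<n. (cmod (v r))\<^sup>2) / c"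
    using \<open>0 < c\<close> by (simp add: norm_divide power_divide sum_divide_distrib)
  also have "\<dots> = 1"
    using \<open>0 < c\<close> unfolding c_def by simp
  finally show ?thesis
    using \<open>0 < c\<close> that[of "\<lambda>r. v r / sqrt c"] unfolding c_def by simp
qed

lemma density_rank_one_decomposition:
  assumes X: "density n X" and n: "0 < n"
  obtains w u where "\<forall>t<n. 0 \<le> w t" "(\<Sum>t<n. w t) = 1" "\<forall>t<n. (\<Sum>r<n. (cmod (u t r))\<^sup>2) = 1"
    "X = msum n n {..<n} (\<lambda>t. complex_of_real (w t) \<cdot>\<^sub>m rank_one_mat n (u t))"
proof -
  have X_carrier: "X \<in> carrier_mat n n" and "mtrace X = 1"
    using X unfolding density_def psd_def by auto
  obtain v where v: "\<forall>i<n. \<forall>j<n. X $$ (i, j) = (\<Sum>t<n. v t i * cnj (v t j))"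
    using X psd_kernel_gram unfolding density_def psd_iff_psd_kernel by blast
  define w where "w t = (\<Sum>r<n. (cmod (v t r))\<^sup>2)" for t
  have w_nonneg: "0 \<le> w t" for t
    unfolding w_def by (simp add: sum_nonneg)
  have "\<exists>u. (\<Sum>r<n. (cmod (u r))\<^sup>2) = 1 \<and> (\<forall>r<n. v t r = complex_of_real (sqrt (w t)) * u r)" for t
    unfolding w_def by (rule unit_vector_scaling[OF n, of "v t"]) blast
  then obtain u where "\<forall>t. (\<Sum>r<n. (cmod (u t r))\<^sup>2) = 1 \<and> (\<forall>r<n. v t r = complex_of_real (sqrt (w t)) * u t r)"
    by metis
  then have unit: "\<And>t. (\<Sum>r<n. (cmod (u t r))\<^sup>2) = 1"
    and v_scale: "\<And>t r. r < n \<Longrightarrow> v t r = complex_of_real (sqrt (w t)) * u t r"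
    by auto
  have "mtrace X = complex_of_real (\<Sum>t<n. w t)"
  proof -
    have "mtrace X = (\<Sum>r<n. \<Sum>t<n. v t r * cnj (v t r))"
      unfolding mtrace_def using X_carrier v by simp
    also have "\<dots> = (\<Sum>t<n. \<Sum>r<n. v t r * cnj (v t r))"
      by (rule sum.swap)
    finally show ?thesis
      unfolding w_def of_real_sum complex_norm_square .
  qed
  then have w_sum: "(\<Sum>t<n. w t) = 1"
    using \<open>mtrace X = 1\<close> of_real_eq_1_iff by metis
  have X_eq: "X = msum n n {..<n} (\<lambda>t. complex_of_real (w t) \<cdot>\<^sub>m rank_one_mat n (u t))"
  proof (rule eq_matI)
    fix r s assume "r < dim_row (msum n n {..<n} (\<lambda>t. complex_of_real (w t) \<cdot>\<^sub>m rank_one_mat n (u t)))"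
      "s < dim_col (msum n n {..<n} (\<lambda>t. complex_of_real (w t) \<cdot>\<^sub>m rank_one_mat n (u t)))"
    then have rs: "r < n" "s < n" by auto
    have "v t r * cnj (v t s) = complex_of_real (w t) * (u t r * cnj (u t s))" for t
    proof -
      have "complex_of_real (sqrt (w t)) * complex_of_real (sqrt (w t)) = complex_of_real (w t)"
        using w_nonneg[of t] by (simp flip: of_real_mult)
      then show ?thesis using rs by (simp add: v_scale ac_simps)
    qed
    then show "X $$ (r, s) = msum n n {..<n} (\<lambda>t. complex_of_real (w t) \<cdot>\<^sub>m rank_one_mat n (u t)) $$ (r, s)"
      using v rs by (simp add: rank_one_mat_def)
  qed (use X_carrier in auto)
  show ?thesis
    by (rule that) (use w_nonneg w_sum unit X_eq in auto)
qed

lemma image_density_eq_hull_rank_one: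
  assumes lin: "\<And>I c X. finite (I :: nat set) \<Longrightarrow> \<forall>t\<in>I. X t \<in> carrier_mat n n \<Longrightarrow>
      T (msum n n I (\<lambda>t. c t \<cdot>\<^sub>m X t)) = msum m m I (\<lambda>t. c t \<cdot>\<^sub>m T (X t))"
    and n: "0 < n"
  shows "T ` {X. density n X} = mat_hull m m {T (rank_one_mat n u) | u. (\<Sum>r<n. (cmod (u r))\<^sup>2) = 1}"
    (is "_ = mat_hull m m ?S")
proof (intro equalityI subsetI)
  fix Y assume "Y \<in> T ` {X. density n X}"
  then obtain X where X: "density n X" and Y: "Y = T X" by blast
  obtain w u where w: "\<forall>t<n. 0 \<le> w t" "(\<Sum>t<n. w t) = 1"
    and u: "\<forall>t<n. (\<Sum>r<n. (cmod (u t r))\<^sup>2) = 1"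
    and X_eq: "X = msum n n {..<n} (\<lambda>t. complex_of_real (w t) \<cdot>\<^sub>m rank_one_mat n (u t))"
    by (rule density_rank_one_decomposition[OF X n])
  have "Y = msum m m {..<n} (\<lambda>t. complex_of_real (w t) \<cdot>\<^sub>m T (rank_one_mat n (u t)))"
    unfolding Y X_eq by (rule lin) auto
  moreover have "\<forall>t<n. 0 \<le> w t \<and> T (rank_one_mat n (u t)) \<in> ?S"
    using w u by blast
  ultimately show "Y \<in> mat_hull m m ?S"
    unfolding mat_hull_def using w(2)
    by (intro CollectI exI[of _ n] exI[of _ w] exI[of _ "\<lambda>t. T (rank_one_mat n (u t))"]) simp
next
  fix Y assume "Y \<in> mat_hull m m ?S"
  then obtain l :: nat and w F where w: "\<forall>t<l. 0 \<le> w t \<and> F t \<in> ?S" "(\<Sum>t<l. w t) = 1"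
    and Y: "Y = msum m m {..<l} (\<lambda>t. complex_of_real (w t) \<cdot>\<^sub>m F t)"
    unfolding mat_hull_def by blast
  then have "\<forall>t<l. \<exists>u. F t = T (rank_one_mat n u) \<and> (\<Sum>r<n. (cmod (u r))\<^sup>2) = 1"
    by blast
  then obtain u where u: "\<forall>t<l. F t = T (rank_one_mat n (u t)) \<and> (\<Sum>r<n. (cmod (u t r))\<^sup>2) = 1"
    by metis
  let ?X = "msum n n {..<l} (\<lambda>t. complex_of_real (w t) \<cdot>\<^sub>m rank_one_mat n (u t))"
  have "density n ?X"
    using w u by (intro density_convex_rank_one) simp_all
  have "T ?X = msum m m {..<l} (\<lambda>t. complex_of_real (w t) \<cdot>\<^sub>m T (rank_one_mat n (u t)))"
    by (rule lin) auto
  also have "\<dots> = Y"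
    unfolding Y using u by (intro msum_cong) auto
  finally have "Y = T ?X" ..
  with \<open>density n ?X\<close> show "Y \<in> T ` {X. density n X}"
    by (intro rev_image_eqI[of ?X]) simp_all
qed

section \<open>Measure-and-prepare channels\<close>

lemma dim_mat_adjoint [simp]: "dim_row (mat_adjoint B) = dim_col B" "dim_col (mat_adjoint B) = dim_row B"
  by (auto simp: mat_adjoint_def)

lemma index_mat_adjoint [simp]:
  "i < dim_col B \<Longrightarrow> j < dim_row B \<Longrightarrow> mat_adjoint B $$ (i, j) = cnj (B $$ (j, i))"
  by (auto simp: mat_adjoint_def mat_of_rows_def)

definition vectorize :: "nat \<Rightarrow> complex mat \<Rightarrow> nat \<Rightarrow> complex" where
  "vectorize N B r = B $$ (r mod N, r div N)"

lemma vectorize_mat: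
  assumes "r < p * N"
  shows "vectorize N (mat N p (\<lambda>(j, a). u (a * N + j))) r = u r"
proof -
  have "0 < N" using assms by (metis mult_0_right neq0_conv not_less0)
  then show ?thesis
    using assms by (simp add: vectorize_def less_mult_imp_div_less mult.commute)
qed

lemma sum_div_mod:
  assumes "0 < (N::nat)"
  shows "(\<Sum>r<p * N. h (r div N) (r mod N)) = (\<Sum>a<p. \<Sum>j<N. h a j)"
proof -
  have "(\<Sum>a<p. \<Sum>j<N. h a j) = (\<Sum>(a, j)\<in>{..<p} \<times> {..<N}. h a j)"
    by (simp add: sum.cartesian_product)
  also have "\<dots> = (\<Sum>r<p * N. h (r div N) (r mod N))"
    by (rule sum.reindex_bij_witness[where j="\<lambda>(a, j). a * N + j" and i="\<lambda>r. (r div N, r mod N)"])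
      (use assms in \<open>auto simp: block_index_less less_mult_imp_div_less\<close>)
  finally show ?thesis ..
qed

lemma mtrace_mult_adjoint:
  assumes B: "B \<in> carrier_mat N p" and N: "0 < N"
  shows "mtrace (B * mat_adjoint B) = complex_of_real (\<Sum>r<p * N. (cmod (vectorize N B r))\<^sup>2)"
proof -
  have "mtrace (B * mat_adjoint B) = (\<Sum>j<N. \<Sum>a<p. B $$ (j, a) * cnj (B $$ (j, a)))"
    unfolding mtrace_def using B by (auto simp: scalar_prod_def lessThan_atLeast0 intro!: sum.cong)
  also have "\<dots> = (\<Sum>a<p. \<Sum>j<N. B $$ (j, a) * cnj (B $$ (j, a)))"
    by (rule sum.swap)
  also have "\<dots> = (\<Sum>r<p * N. vectorize N B r * cnj (vectorize N B r))"
    unfolding vectorize_def using sum_div_mod[OF N, of "\<lambda>a j. B $$ (j, a) * cnj (B $$ (j, a))" p] by simp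
  finally show ?thesis
    unfolding complex_norm_square of_real_sum .
qed

text \<open>\<open>ptrace_mult p N A X\<close> is the partial trace \<open>Tr\<^sub>1[(A \<otimes> 1) X]\<close> of \<open>X \<in> M\<^sub>p \<otimes> M\<^sub>N\<close>.\<close>
definition ptrace_mult :: "nat \<Rightarrow> nat \<Rightarrow> complex mat \<Rightarrow> complex mat \<Rightarrow> complex mat" where
  "ptrace_mult p N A X = msum N N ({..<p} \<times> {..<p}) (\<lambda>(a, b). A $$ (b, a) \<cdot>\<^sub>m block N X a b)"

lemma ptrace_mult_carrier [simp]: "ptrace_mult p N A X \<in> carrier_mat N N"
  by (simp add: ptrace_mult_def)

lemma ptrace_mult_rank_one_vectorize:
  assumes B: "B \<in> carrier_mat N p" and A: "A \<in> carrier_mat p p"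
  shows "ptrace_mult p N A (rank_one_mat (p * N) (vectorize N B)) = B * transpose_mat A * mat_adjoint B"
proof (rule eq_matI)
  fix j j' assume "j < dim_row (B * transpose_mat A * mat_adjoint B)"
    "j' < dim_col (B * transpose_mat A * mat_adjoint B)"
  then have jj: "j < N" "j' < N" using B by auto
  have "ptrace_mult p N A (rank_one_mat (p * N) (vectorize N B)) $$ (j, j') =
      (\<Sum>(a, b)\<in>{..<p} \<times> {..<p}. A $$ (b, a) * (B $$ (j, a) * cnj (B $$ (j', b))))"
    unfolding ptrace_mult_def using jj
    by (auto simp: block_def rank_one_mat_def vectorize_def block_index_less intro!: sum.cong)
  also have "\<dots> = (\<Sum>a<p. \<Sum>b<p. A $$ (b, a) * (B $$ (j, a) * cnj (B $$ (j', b))))"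
    by (simp add: sum.cartesian_product)
  also have "\<dots> = (\<Sum>b<p. \<Sum>a<p. A $$ (b, a) * (B $$ (j, a) * cnj (B $$ (j', b))))"
    by (rule sum.swap)
  also have "\<dots> = (B * transpose_mat A * mat_adjoint B) $$ (j, j')"
    using B A jj by (auto simp: scalar_prod_def lessThan_atLeast0 sum_distrib_right sum_distrib_left
        algebra_simps intro!: sum.cong)
  finally show "ptrace_mult p N A (rank_one_mat (p * N) (vectorize N B)) $$ (j, j') =
      (B * transpose_mat A * mat_adjoint B) $$ (j, j')" .
qed (use B in \<open>auto simp: ptrace_mult_def\<close>)

lemma mtrace_unit_mat_mult:
  assumes "A \<in> carrier_mat p p" "a < p" "b < p"
  shows "mtrace (unit_mat p a b * A) = A $$ (b, a)"
proof -
  have "(unit_mat p a b * A) $$ (x, x) = (if x = a then A $$ (b, a) else 0)" if "x < p" for x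
    using assms that by (auto simp: unit_mat_def scalar_prod_def if_distrib[of "\<lambda>z. z * _"] cong: if_cong)
  then show ?thesis
    using assms unfolding mtrace_def by (simp add: unit_mat_def)
qed

lemma tensor_map_measure_prepare:
  assumes M: "\<forall>i<l. M i \<in> carrier_mat p p" and \<sigma>: "\<forall>i<l. \<sigma> i \<in> carrier_mat q q"
    and \<Xi>: "\<And>X. \<Xi> X = msum q q {..<l} (\<lambda>i. mtrace (X * M i) \<cdot>\<^sub>m \<sigma> i)"
    and L: "linear_map N k \<Psi>"
  shows "tensor_map p N q k \<Xi> \<Psi> X =
    msum (q * k) (q * k) {..<l} (\<lambda>i. kron (\<sigma> i) (\<Psi> (ptrace_mult p N (M i) X)))"
proof (rule eq_matI)
  fix r s assume "r < dim_row (msum (q * k) (q * k) {..<l} (\<lambda>i. kron (\<sigma> i) (\<Psi> (ptrace_mult p N (M i) X))))"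
    "s < dim_col (msum (q * k) (q * k) {..<l} (\<lambda>i. kron (\<sigma> i) (\<Psi> (ptrace_mult p N (M i) X))))"
  then have rs: "r < q * k" "s < q * k" by auto
  then have "r div k < q" "s div k < q" "r mod k < k" "s mod k < k"
    by (auto simp: less_mult_imp_div_less) (metis mod_less_divisor mult_eq_0_iff neq0_conv not_less0)+
  note index = this
  have \<Xi>_unit: "\<Xi> (unit_mat p a b) $$ (r div k, s div k) = (\<Sum>i<l. M i $$ (b, a) * \<sigma> i $$ (r div k, s div k))"
    if "a < p" "b < p" for a b
    unfolding \<Xi> using that index M \<sigma> by (auto simp: mtrace_unit_mat_mult intro!: sum.cong)
  have \<Xi>_carrier: "\<forall>a<p. \<forall>b<p. \<Xi> (unit_mat p a b) \<in> carrier_mat q q"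
    unfolding \<Xi> by simp
  let ?\<Psi> = "\<lambda>a b. \<Psi> (block N X a b) $$ (r mod k, s mod k)"
  have \<Psi>_ptrace: "\<Psi> (ptrace_mult p N (M i) X) $$ (r mod k, s mod k) =
      (\<Sum>(a, b)\<in>{..<p} \<times> {..<p}. M i $$ (b, a) * ?\<Psi> a b)" for i
    unfolding ptrace_mult_def split_def using index linear_map_carrier[OF L block_carrier]
    by (simp add: linear_map_msum[OF L] linear_map_carrier[OF L block_carrier, THEN carrier_matD(1)]
        linear_map_carrier[OF L block_carrier, THEN carrier_matD(2)])
  have "tensor_map p N q k \<Xi> \<Psi> X $$ (r, s) =
      (\<Sum>(a, b)\<in>{..<p} \<times> {..<p}. \<Sum>i<l. M i $$ (b, a) * \<sigma> i $$ (r div k, s div k) * ?\<Psi> a b)"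
    unfolding index_tensor_map[OF \<Xi>_carrier L rs]
    by (intro sum.cong refl) (auto simp: \<Xi>_unit sum_distrib_right)
  also have "\<dots> = (\<Sum>i<l. \<Sum>(a, b)\<in>{..<p} \<times> {..<p}. M i $$ (b, a) * \<sigma> i $$ (r div k, s div k) * ?\<Psi> a b)"
    unfolding split_def by (rule sum.swap)
  also have "\<dots> = (\<Sum>i<l. \<sigma> i $$ (r div k, s div k) * \<Psi> (ptrace_mult p N (M i) X) $$ (r mod k, s mod k))"
    unfolding \<Psi>_ptrace sum_distrib_left split_def by (intro sum.cong refl) (simp add: ac_simps)
  also have "\<dots> = msum (q * k) (q * k) {..<l} (\<lambda>i. kron (\<sigma> i) (\<Psi> (ptrace_mult p N (M i) X))) $$ (r, s)"
    using rs \<sigma> by (auto intro!: sum.cong index_kron[symmetric] linear_map_carrier[OF L])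
  finally show "tensor_map p N q k \<Xi> \<Psi> X $$ (r, s) =
      msum (q * k) (q * k) {..<l} (\<lambda>i. kron (\<sigma> i) (\<Psi> (ptrace_mult p N (M i) X))) $$ (r, s)" .
qed simp_all

lemma rank_one_unit_vectors_eq_vectorize:
  assumes N: "0 < N"
  shows "{f (rank_one_mat (p * N) u) | u. (\<Sum>r<p * N. (cmod (u r))\<^sup>2) = 1} =
    {f (rank_one_mat (p * N) (vectorize N B)) | B. B \<in> carrier_mat N p \<and> mtrace (B * mat_adjoint B) = 1}"
proof (intro equalityI subsetI)
  fix Y assume "Y \<in> {f (rank_one_mat (p * N) u) | u. (\<Sum>r<p * N. (cmod (u r))\<^sup>2) = 1}"
  then obtain u where Y: "Y = f (rank_one_mat (p * N) u)" and u: "(\<Sum>r<p * N. (cmod (u r))\<^sup>2) = 1"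
    by blast
  define B where "B = mat N p (\<lambda>(j, a). u (a * N + j))"
  have B: "B \<in> carrier_mat N p" unfolding B_def by simp
  have vec: "vectorize N B r = u r" if "r < p * N" for r
    unfolding B_def using vectorize_mat[OF that] .
  have "(\<Sum>r<p * N. (cmod (vectorize N B r))\<^sup>2) = (\<Sum>r<p * N. (cmod (u r))\<^sup>2)"
    by (intro sum.cong refl) (simp add: vec)
  then have "mtrace (B * mat_adjoint B) = 1"
    unfolding mtrace_mult_adjoint[OF B N] u by simp
  moreover have "rank_one_mat (p * N) (vectorize N B) = rank_one_mat (p * N) u"
    using vec by (rule rank_one_mat_cong)
  then have "Y = f (rank_one_mat (p * N) (vectorize N B))"
    unfolding Y by simp
  ultimately show "Y \<in> {f (rank_one_mat (p * N) (vectorize N B)) | B.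
      B \<in> carrier_mat N p \<and> mtrace (B * mat_adjoint B) = 1}"
    using B by blast
next
  fix Y assume "Y \<in> {f (rank_one_mat (p * N) (vectorize N B)) | B.
      B \<in> carrier_mat N p \<and> mtrace (B * mat_adjoint B) = 1}"
  then obtain B where Y: "Y = f (rank_one_mat (p * N) (vectorize N B))" and B: "B \<in> carrier_mat N p"
    and "mtrace (B * mat_adjoint B) = 1"
    by blast
  then have "(\<Sum>r<p * N. (cmod (vectorize N B r))\<^sup>2) = 1"
    unfolding mtrace_mult_adjoint[OF B N] by (simp only: of_real_eq_1_iff)
  with Y show "Y \<in> {f (rank_one_mat (p * N) u) | u. (\<Sum>r<p * N. (cmod (u r))\<^sup>2) = 1}"
    by blast
qed

theorem lemma8p6:
  fixes p q N k l :: nat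
    and M \<sigma> :: "nat \<Rightarrow> complex mat"
    and \<Xi> \<Psi> :: "complex mat \<Rightarrow> complex mat"
  assumes "0 < p" and "0 < q" and "0 < N" and "0 < k"
    and "POVM p l M"
    and "\<forall>i<l. density q (\<sigma> i)"
    and "\<And>X. \<Xi> X = msum q q {..<l} (\<lambda>i. mtrace (X * M i) \<cdot>\<^sub>m \<sigma> i)"
    and "quantum_channel N k \<Psi>"
  shows "tensor_map p N q k \<Xi> \<Psi> ` {X. density (p * N) X} =
    mat_hull (q * k) (q * k)
      {msum (q * k) (q * k) {..<l} (\<lambda>i. kron (\<sigma> i) (\<Psi> (B * transpose_mat (M i) * mat_adjoint B))) | B.
         B \<in> carrier_mat N p \<and> mtrace (B * mat_adjoint B) = 1}"
proof -
  have M: "\<forall>i<l. M i \<in> carrier_mat p p" using assms(5) unfolding POVM_def psd_def by auto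
  have \<sigma>: "\<forall>i<l. \<sigma> i \<in> carrier_mat q q" using assms(6) unfolding density_def psd_def by auto
  have L: "linear_map N k \<Psi>" using assms(8) unfolding quantum_channel_def by auto
  let ?T = "tensor_map p N q k \<Xi> \<Psi>"
  have pure: "?T (rank_one_mat (p * N) (vectorize N B)) =
      msum (q * k) (q * k) {..<l} (\<lambda>i. kron (\<sigma> i) (\<Psi> (B * transpose_mat (M i) * mat_adjoint B)))"
    if "B \<in> carrier_mat N p" for B
    unfolding tensor_map_measure_prepare[OF M \<sigma> assms(7) L]
    using M that by (intro msum_cong) (simp add: ptrace_mult_rank_one_vectorize)
  have "?T ` {X. density (p * N) X} = mat_hull (q * k) (q * k)
      {?T (rank_one_mat (p * N) u) | u. (\<Sum>r<p * N. (cmod (u r))\<^sup>2) = 1}"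
    using assms(1,3) by (intro image_density_eq_hull_rank_one tensor_map_msum[OF _ L]) (simp_all add: assms(7))
  also have "\<dots> = mat_hull (q * k) (q * k)
      {?T (rank_one_mat (p * N) (vectorize N B)) | B. B \<in> carrier_mat N p \<and> mtrace (B * mat_adjoint B) = 1}"
    unfolding rank_one_unit_vectors_eq_vectorize[OF assms(3)] ..
  also have "\<dots> = mat_hull (q * k) (q * k)
      {msum (q * k) (q * k) {..<l} (\<lambda>i. kron (\<sigma> i) (\<Psi> (B * transpose_mat (M i) * mat_adjoint B))) | B.
         B \<in> carrier_mat N p \<and> mtrace (B * mat_adjoint B) = 1}"
    using pure by (intro arg_cong[where f="mat_hull (q * k) (q * k)"] Collect_cong ex_cong1) auto
  finally show ?thesis .
qed

end
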